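(* Let $M\ge 2$ and $d\ge 2$ be integers, and let $\{p(a,b,c|x,y,z)\}$ be any tripartite nonsignalling probability distribution in which each of the three parties $A,B,C$ chooses one of $M$ measurements, $A_x,B_y,C_z$ with $x,y,z\in\{1,\dots,M\}$, each having $d$ outcomes labelled by $\{0,1,\dots,d-1\}$ (identified with $\mathbb{Z}_d$). Then for every pair $i,j\in\{1,\dots,M\}$ and for $X$ denoting either $A$ or $B$, $$I^{2,M,d}_{AB}+\langle[X_i-C_j]\rangle+\langle[C_j-X_i]\rangle\ \ge\ d-1,$$ where $$I^{2,M,d}_{AB}=\sum_{\alpha=1}^{M}\Big(\langle[A_\alpha-B_\alpha]\rangle+\langle[B_\alpha-A_{\alpha+1}]\rangle\Big),$$ with the convention that $A_{M+1}$ denotes the variable $[A_1+1]$ (so the term $\langle[B_M-A_{M+1}]\rangle$ equals $\langle[B_M-A_1-1]\rangle$).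
   Context: For a random variable $\Omega$ built as an integer linear combination of outcomes, $[\Omega]$ denotes $\Omega$ modulo $d$, and $\langle[\Omega]\rangle=\sum_{i=0}^{d-1} i\,P([\Omega]=i)$. Each such expectation is computed from the (well-defined, by no-signalling) marginal joint distribution of the two measurements involved; e.g. $\langle[A_\alpha-B_\alpha]\rangle$ uses $p(a,b|x=\alpha,y=\alpha)$ and $\langle[X_i-C_j]\rangle$ uses the marginal distribution of the outcomes of $X_i$ and $C_j$. Nonsignalling means that the marginal distribution of any subset of parties does not depend on the measurement choices of the remaining parties. *)

theory Defs
  imports Complex_Main
begin

text \<open>A tripartite behaviour: p a b c x y z = p(a,b,c|x,y,z), with outcomes
 a,b,c in {0..<d} (representing Z_d) and settings x,y,z in {1..M}.\<close>

type_synonym behaviour = "nat \<Rightarrow> nat \<Rightarrow> nat \<Rightarrow> nat \<Rightarrow> nat \<Rightarrow> nat \<Rightarrow> real"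

definition prob_dist :: "nat \<Rightarrow> nat \<Rightarrow> behaviour \<Rightarrow> bool" where
  "prob_dist M d p \<longleftrightarrow>
     (\<forall>x\<in>{1..M}. \<forall>y\<in>{1..M}. \<forall>z\<in>{1..M}.
        (\<forall>a<d. \<forall>b<d. \<forall>c<d. p a b c x y z \<ge> 0) \<and>
        (\<Sum>a<d. \<Sum>b<d. \<Sum>c<d. p a b c x y z) = 1)"

text \<open>Nonsignalling: the marginal of any subset of parties is independent of the
 settings of the remaining parties (the two-party conditions imply the one-party ones).\<close>
definition nonsignalling :: "nat \<Rightarrow> nat \<Rightarrow> behaviour \<Rightarrow> bool" where
  "nonsignalling M d p \<longleftrightarrow>
     (\<forall>x\<in>{1..M}. \<forall>y\<in>{1..M}. \<forall>z\<in>{1..M}. \<forall>z'\<in>{1..M}. \<forall>a<d. \<forall>b<d.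
        (\<Sum>c<d. p a b c x y z) = (\<Sum>c<d. p a b c x y z')) \<and>
     (\<forall>x\<in>{1..M}. \<forall>y\<in>{1..M}. \<forall>y'\<in>{1..M}. \<forall>z\<in>{1..M}. \<forall>a<d. \<forall>c<d.
        (\<Sum>b<d. p a b c x y z) = (\<Sum>b<d. p a b c x y' z)) \<and>
     (\<forall>x\<in>{1..M}. \<forall>x'\<in>{1..M}. \<forall>y\<in>{1..M}. \<forall>z\<in>{1..M}. \<forall>b<d. \<forall>c<d.
        (\<Sum>a<d. p a b c x y z) = (\<Sum>a<d. p a b c x' y z))"

text \<open>Two-party marginals (well defined by nonsignalling; we fix the remaining
 party's setting to 1).\<close>
definition margAB :: "nat \<Rightarrow> behaviour \<Rightarrow> nat \<Rightarrow> nat \<Rightarrow> nat \<Rightarrow> nat \<Rightarrow> real" where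
  "margAB d p x y a b = (\<Sum>c<d. p a b c x y 1)"
definition margAC :: "nat \<Rightarrow> behaviour \<Rightarrow> nat \<Rightarrow> nat \<Rightarrow> nat \<Rightarrow> nat \<Rightarrow> real" where
  "margAC d p x z a c = (\<Sum>b<d. p a b c x 1 z)"
definition margBC :: "nat \<Rightarrow> behaviour \<Rightarrow> nat \<Rightarrow> nat \<Rightarrow> nat \<Rightarrow> nat \<Rightarrow> real" where
  "margBC d p y z b c = (\<Sum>a<d. p a b c 1 y z)"

text \<open>Expectation of [f(u,v)] = f(u,v) mod d under a two-outcome joint distribution q:
 sum_{i=0}^{d-1} i P([f]=i) = sum_{u,v} q(u,v) ((f u v) mod d).\<close>
definition expmod :: "nat \<Rightarrow> (nat \<Rightarrow> nat \<Rightarrow> real) \<Rightarrow> (int \<Rightarrow> int \<Rightarrow> int) \<Rightarrow> real" where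
  "expmod d q f = (\<Sum>u<d. \<Sum>v<d. q u v * real_of_int (f (int u) (int v) mod int d))"

definition I_AB :: "nat \<Rightarrow> nat \<Rightarrow> behaviour \<Rightarrow> real" where
  "I_AB M d p = (\<Sum>\<alpha>=1..M.
      expmod d (margAB d p \<alpha> \<alpha>) (\<lambda>a b. a - b) +
      (if \<alpha> < M then expmod d (margAB d p (\<alpha>+1) \<alpha>) (\<lambda>a b. b - a)
       else expmod d (margAB d p 1 M) (\<lambda>a b. b - a - 1)))"

end

theory Submission
  imports Defs
begin

(* For one deterministic assignment of outcomes, the cyclic chain
   A_1, B_1, A_2, ..., A_M, B_M, A_1 + 1 and the triangle inequality [u + v] <= [u] + [v]
   give I_AB >= [A_i - (A_i + 1)] = d - 1.  Under nonsignalling alone the chain has no joint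
   distribution, so each link <[X - Y]> is bounded below through the pivot C_j, using the joint
   distribution of X, Y and C_j:  <[X - Y]> >= <[X - C_j - s]> - <[Y - C_j - s]>.
   These bounds telescope.  Raising the offset s from 0 to 1 at the node X_i leaves
   I_AB >= <[X_i - C_j - 1]> - <[X_i - C_j]>, since the offset 1 at A_1 + 1 closes the cycle
   with the offset 0 at A_1; and [X_i - C_j - 1] + [C_j - X_i] = d - 1 pointwise. *)

lemma mod_add_le:
  fixes u v d :: int
  assumes "d \<ge> 0"
  shows "(u + v) mod d \<le> u mod d + v mod d"
proof (cases "d = 0")
  case False
  then have "(u mod d + v mod d) mod d \<le> u mod d + v mod d"
    using assms by (intro zmod_le_nonneg_dividend) simp
  then show ?thesis by (simp add: mod_add_eq)
qed simp

lemma mod_add_mod_of_sum_eq_minus_one: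
  fixes v w d :: int
  assumes "v + w = -1" and "d > 0"
  shows "v mod d + w mod d = d - 1"
proof -
  have "w = - (v + 1)" using assms(1) by simp
  then show ?thesis
    using assms(2) minus_mod_int_eq[of d "v + 1"] by (simp add: mod_add_eq[symmetric])
qed

definition joint_expectation ::
    "nat \<Rightarrow> behaviour \<Rightarrow> nat \<Rightarrow> nat \<Rightarrow> nat \<Rightarrow> (nat \<Rightarrow> nat \<Rightarrow> nat \<Rightarrow> real) \<Rightarrow> real" where
  "joint_expectation d p x y z F = (\<Sum>a<d. \<Sum>b<d. \<Sum>c<d. p a b c x y z * F a b c)"

lemma joint_expectation_mono:
  assumes "prob_dist M d p" and "x \<in> {1..M}" "y \<in> {1..M}" "z \<in> {1..M}"
    and "\<And>a b c. a < d \<Longrightarrow> b < d \<Longrightarrow> c < d \<Longrightarrow> F a b c \<le> G a b c"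
  shows "joint_expectation d p x y z F \<le> joint_expectation d p x y z G"
  unfolding joint_expectation_def
proof (intro sum_mono)
  fix a b c assume "a \<in> {..<d}" "b \<in> {..<d}" "c \<in> {..<d}"
  with assms show "p a b c x y z * F a b c \<le> p a b c x y z * G a b c"
    unfolding prob_dist_def by (simp add: mult_left_mono)
qed

lemma joint_expectation_add:
  "joint_expectation d p x y z (\<lambda>a b c. F a b c + G a b c)
     = joint_expectation d p x y z F + joint_expectation d p x y z G"
  unfolding joint_expectation_def by (simp add: distrib_left sum.distrib)

lemma expmod_margAB_eq_joint_expectation:
  assumes "nonsignalling M d p" and "x \<in> {1..M}" "y \<in> {1..M}" "z \<in> {1..M}"
  shows "expmod d (margAB d p x y) f
           = joint_expectation d p x y z (\<lambda>a b c. of_int (f (int a) (int b) mod int d))"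
proof -
  have "1 \<in> {1..M}" using assms(2) by simp
  then have "margAB d p x y a b = (\<Sum>c<d. p a b c x y z)" if "a < d" "b < d" for a b
    using assms that unfolding nonsignalling_def margAB_def by blast
  then show ?thesis
    unfolding expmod_def joint_expectation_def by (simp add: sum_distrib_right)
qed

lemma expmod_margAC_eq_joint_expectation:
  assumes "nonsignalling M d p" and "x \<in> {1..M}" "y \<in> {1..M}" "z \<in> {1..M}"
  shows "expmod d (margAC d p x z) f
           = joint_expectation d p x y z (\<lambda>a b c. of_int (f (int a) (int c) mod int d))"
proof -
  have "1 \<in> {1..M}" using assms(2) by simp
  then have "margAC d p x z a c = (\<Sum>b<d. p a b c x y z)" if "a < d" "c < d" for a c
    using assms that unfolding nonsignalling_def margAC_def by blast
  then have "expmod d (margAC d p x z) f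
      = (\<Sum>a<d. \<Sum>c<d. \<Sum>b<d. p a b c x y z * of_int (f (int a) (int c) mod int d))"
    unfolding expmod_def by (simp add: sum_distrib_right)
  also have "\<dots> = joint_expectation d p x y z (\<lambda>a b c. of_int (f (int a) (int c) mod int d))"
    unfolding joint_expectation_def by (rule sum.cong[OF refl], rule sum.swap)
  finally show ?thesis .
qed

lemma expmod_margBC_eq_joint_expectation:
  assumes "nonsignalling M d p" and "x \<in> {1..M}" "y \<in> {1..M}" "z \<in> {1..M}"
  shows "expmod d (margBC d p y z) f
           = joint_expectation d p x y z (\<lambda>a b c. of_int (f (int b) (int c) mod int d))"
proof -
  have "1 \<in> {1..M}" using assms(2) by simp
  then have "margBC d p y z b c = (\<Sum>a<d. p a b c x y z)" if "b < d" "c < d" for b c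
    using assms that unfolding nonsignalling_def margBC_def by blast
  then have "expmod d (margBC d p y z) f
      = (\<Sum>b<d. \<Sum>c<d. \<Sum>a<d. p a b c x y z * of_int (f (int b) (int c) mod int d))"
    unfolding expmod_def by (simp add: sum_distrib_right)
  also have "\<dots> = (\<Sum>b<d. \<Sum>a<d. \<Sum>c<d. p a b c x y z * of_int (f (int b) (int c) mod int d))"
    by (rule sum.cong[OF refl], rule sum.swap)
  also have "\<dots> = joint_expectation d p x y z (\<lambda>a b c. of_int (f (int b) (int c) mod int d))"
    unfolding joint_expectation_def by (rule sum.swap)
  finally show ?thesis .
qed

lemma joint_expectation_mod_triangle:
  fixes F G H :: "nat \<Rightarrow> nat \<Rightarrow> nat \<Rightarrow> int"
  assumes "prob_dist M d p" and "x \<in> {1..M}" "y \<in> {1..M}" "z \<in> {1..M}"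
    and "\<And>a b c. H a b c = F a b c + G a b c"
  shows "joint_expectation d p x y z (\<lambda>a b c. of_int (H a b c mod int d))
     \<le> joint_expectation d p x y z (\<lambda>a b c. of_int (F a b c mod int d))
       + joint_expectation d p x y z (\<lambda>a b c. of_int (G a b c mod int d))"
  unfolding joint_expectation_add[symmetric]
proof (intro joint_expectation_mono[OF assms(1-4)])
  fix a b c
  have "H a b c mod int d \<le> F a b c mod int d + G a b c mod int d"
    unfolding assms(5) by (rule mod_add_le) simp
  then show "real_of_int (H a b c mod int d)
      \<le> real_of_int (F a b c mod int d) + real_of_int (G a b c mod int d)"
    by (simp only: of_int_add[symmetric] of_int_le_iff)
qed

lemma expmod_margAB_ge_AC_minus_BC:
  assumes "prob_dist M d p" "nonsignalling M d p" and "x \<in> {1..M}" "y \<in> {1..M}" "z \<in> {1..M}"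
    and "\<And>a b c. g a c = f a b + h b c"
  shows "expmod d (margAC d p x z) g - expmod d (margBC d p y z) h \<le> expmod d (margAB d p x y) f"
  using joint_expectation_mod_triangle[OF assms(1,3-5), of "\<lambda>a b c. g (int a) (int c)"
      "\<lambda>a b c. f (int a) (int b)" "\<lambda>a b c. h (int b) (int c)"] assms(6)
  unfolding expmod_margAB_eq_joint_expectation[OF assms(2-5)]
    expmod_margAC_eq_joint_expectation[OF assms(2-5)]
    expmod_margBC_eq_joint_expectation[OF assms(2-5)]
  by simp

lemma expmod_margAB_ge_BC_minus_AC:
  assumes "prob_dist M d p" "nonsignalling M d p" and "x \<in> {1..M}" "y \<in> {1..M}" "z \<in> {1..M}"
    and "\<And>a b c. g b c = f a b + h a c"
  shows "expmod d (margBC d p y z) g - expmod d (margAC d p x z) h \<le> expmod d (margAB d p x y) f"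
  using joint_expectation_mod_triangle[OF assms(1,3-5), of "\<lambda>a b c. g (int b) (int c)"
      "\<lambda>a b c. f (int a) (int b)" "\<lambda>a b c. h (int a) (int c)"] assms(6)
  unfolding expmod_margAB_eq_joint_expectation[OF assms(2-5)]
    expmod_margAC_eq_joint_expectation[OF assms(2-5)]
    expmod_margBC_eq_joint_expectation[OF assms(2-5)]
  by simp

lemma expmod_add_complement:
  assumes "\<And>u v. f u v + g u v = -1" and "d > 0"
  shows "expmod d q f + expmod d q g = (real d - 1) * (\<Sum>u<d. \<Sum>v<d. q u v)"
proof -
  have "real_of_int (f u v mod int d) + real_of_int (g u v mod int d) = real d - 1" for u v
  proof -
    have "f u v mod int d + g u v mod int d = int d - 1"
      using assms by (intro mod_add_mod_of_sum_eq_minus_one) simp_all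
    then have "real_of_int (f u v mod int d + g u v mod int d) = real_of_int (int d - 1)"
      by (rule arg_cong)
    then show ?thesis by simp
  qed
  then show ?thesis
    unfolding expmod_def
    by (simp add: sum.distrib[symmetric] sum_distrib_left sum_distrib_right distrib_left[symmetric]
        mult.commute)
qed

lemma margAC_total:
  assumes "prob_dist M d p" and "x \<in> {1..M}" "z \<in> {1..M}"
  shows "(\<Sum>a<d. \<Sum>c<d. margAC d p x z a c) = 1"
proof -
  have "1 \<in> {1..M}" using assms(2) by simp
  with assms have "(\<Sum>a<d. \<Sum>b<d. \<Sum>c<d. p a b c x 1 z) = 1" unfolding prob_dist_def by blast
  moreover have "(\<Sum>a<d. \<Sum>c<d. \<Sum>b<d. p a b c x 1 z) = (\<Sum>a<d. \<Sum>b<d. \<Sum>c<d. p a b c x 1 z)"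
    by (rule sum.cong[OF refl], rule sum.swap)
  ultimately show ?thesis
    unfolding margAC_def by simp
qed

lemma margBC_total:
  assumes "prob_dist M d p" and "y \<in> {1..M}" "z \<in> {1..M}"
  shows "(\<Sum>b<d. \<Sum>c<d. margBC d p y z b c) = 1"
proof -
  have "1 \<in> {1..M}" using assms(2) by simp
  with assms have "(\<Sum>a<d. \<Sum>b<d. \<Sum>c<d. p a b c 1 y z) = 1" unfolding prob_dist_def by blast
  moreover have "(\<Sum>b<d. \<Sum>c<d. \<Sum>a<d. p a b c 1 y z) = (\<Sum>b<d. \<Sum>a<d. \<Sum>c<d. p a b c 1 y z)"
    by (rule sum.cong[OF refl], rule sum.swap)
  moreover have "\<dots> = (\<Sum>a<d. \<Sum>b<d. \<Sum>c<d. p a b c 1 y z)"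
    by (rule sum.swap)
  ultimately show ?thesis
    unfolding margBC_def by simp
qed

(* Node k of the chain A_1, B_1, ..., A_M, B_M, A_(M+1) = [A_1 + 1] is A_(k div 2 + 1) for even k
   and B_(k div 2 + 1) for odd k.  chain_link k is <[node k - node (k+1)]> and
   chain_pivot z s k is <[node k - C_z - s]>. *)
definition chain_link :: "nat \<Rightarrow> nat \<Rightarrow> behaviour \<Rightarrow> nat \<Rightarrow> real" where
  "chain_link M d p k =
     (if even k then expmod d (margAB d p (Suc (k div 2)) (Suc (k div 2))) (\<lambda>a b. a - b)
      else if Suc (k div 2) < M
        then expmod d (margAB d p (Suc (Suc (k div 2))) (Suc (k div 2))) (\<lambda>a b. b - a)
      else expmod d (margAB d p 1 M) (\<lambda>a b. b - a - 1))"

definition chain_pivot :: "nat \<Rightarrow> nat \<Rightarrow> behaviour \<Rightarrow> nat \<Rightarrow> int \<Rightarrow> nat \<Rightarrow> real" where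
  "chain_pivot M d p z s k =
     (if k = 2 * M then expmod d (margAC d p 1 z) (\<lambda>a c. a - c - (s - 1))
      else if even k then expmod d (margAC d p (Suc (k div 2)) z) (\<lambda>a c. a - c - s)
      else expmod d (margBC d p (Suc (k div 2)) z) (\<lambda>b c. b - c - s))"

lemma I_AB_eq_sum_chain_link: "I_AB M d p = (\<Sum>k<2 * M. chain_link M d p k)"
proof -
  have pairs: "(\<Sum>k<2 * n. g k) = (\<Sum>\<alpha><n. g (2 * \<alpha>) + g (Suc (2 * \<alpha>)))" for n and g :: "nat \<Rightarrow> real"
    by (induction n) simp_all
  show ?thesis
    unfolding I_AB_def pairs by (simp add: sum.atLeast1_atMost_eq chain_link_def cong: if_cong)
qed

lemma chain_pivot_A_node:
  assumes "x \<in> {1..M}"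
  shows "chain_pivot M d p z s (2 * (x - 1)) = expmod d (margAC d p x z) (\<lambda>a c. a - c - s)"
proof -
  have "2 * (x - 1) \<noteq> 2 * M" "Suc (2 * (x - 1) div 2) = x" using assms by auto
  then show ?thesis unfolding chain_pivot_def by simp
qed

lemma chain_pivot_B_node:
  assumes "y \<in> {1..M}"
  shows "chain_pivot M d p z s (Suc (2 * (y - 1))) = expmod d (margBC d p y z) (\<lambda>b c. b - c - s)"
proof -
  have "1 \<le> y" using assms by simp
  then have "Suc (2 * (y - 1)) \<noteq> 2 * M" "Suc (Suc (2 * (y - 1)) div 2) = y" by presburger+
  then show ?thesis unfolding chain_pivot_def by simp
qed

lemma chain_link_ge_pivot_diff:
  assumes pd: "prob_dist M d p" and ns: "nonsignalling M d p" and z: "z \<in> {1..M}"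
    and k: "k < 2 * M"
  shows "chain_pivot M d p z s k - chain_pivot M d p z s (Suc k) \<le> chain_link M d p k"
proof -
  define \<alpha> where "\<alpha> = Suc (k div 2)"
  have \<alpha>: "\<alpha> \<in> {1..M}" using k unfolding \<alpha>_def by auto
  consider (A) "k = 2 * (\<alpha> - 1)" | (B) "k = Suc (2 * (\<alpha> - 1))" "\<alpha> < M"
    | (B_last) "k = Suc (2 * (\<alpha> - 1))" "\<alpha> = M"
    using \<alpha> unfolding \<alpha>_def by fastforce
  then show ?thesis
  proof cases
    case A
    then have "chain_link M d p k = expmod d (margAB d p \<alpha> \<alpha>) (\<lambda>a b. a - b)"
      unfolding chain_link_def \<alpha>_def[symmetric] by simp
    then show ?thesis
      unfolding A chain_pivot_A_node[OF \<alpha>] chain_pivot_B_node[OF \<alpha>]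
      by (simp add: expmod_margAB_ge_AC_minus_BC[OF pd ns \<alpha> \<alpha> z])
  next
    case B
    then have \<alpha>': "Suc \<alpha> \<in> {1..M}" and next_node: "Suc k = 2 * (Suc \<alpha> - 1)"
      using \<alpha> by auto
    have "chain_link M d p k = expmod d (margAB d p (Suc \<alpha>) \<alpha>) (\<lambda>a b. b - a)"
      using B unfolding chain_link_def \<alpha>_def[symmetric] by simp
    then show ?thesis
      unfolding next_node chain_pivot_A_node[OF \<alpha>'] unfolding B(1) chain_pivot_B_node[OF \<alpha>]
      by (simp add: expmod_margAB_ge_BC_minus_AC[OF pd ns \<alpha>' \<alpha> z])
  next
    case B_last
    then have "1 \<in> {1..M}" "M \<in> {1..M}" and last_node: "Suc k = 2 * M" using \<alpha> by auto
    have "chain_link M d p k = expmod d (margAB d p 1 M) (\<lambda>a b. b - a - 1)"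
      using B_last unfolding chain_link_def \<alpha>_def[symmetric] by simp
    moreover have "chain_pivot M d p z s (Suc k) = expmod d (margAC d p 1 z) (\<lambda>a c. a - c - (s - 1))"
      unfolding last_node chain_pivot_def by simp
    moreover have "expmod d (margBC d p M z) (\<lambda>b c. b - c - s)
        - expmod d (margAC d p 1 z) (\<lambda>a c. a - c - (s - 1))
        \<le> expmod d (margAB d p 1 M) (\<lambda>a b. b - a - 1)"
      by (rule expmod_margAB_ge_BC_minus_AC[OF pd ns \<open>1 \<in> {1..M}\<close> \<open>M \<in> {1..M}\<close> z]) simp
    ultimately show ?thesis
      using chain_pivot_B_node[OF \<alpha>] B_last by simp
  qed
qed

lemma telescope_switch_le_sum:
  fixes l \<phi> \<psi> :: "nat \<Rightarrow> real"
  assumes "m \<le> n"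
    and "\<And>k. k < m \<Longrightarrow> \<phi> k - \<phi> (Suc k) \<le> l k"
    and "\<And>k. m \<le> k \<Longrightarrow> k < n \<Longrightarrow> \<psi> k - \<psi> (Suc k) \<le> l k"
  shows "\<phi> 0 - \<phi> m + \<psi> m - \<psi> n \<le> (\<Sum>k<n. l k)"
  using assms(1)
proof (induction n rule: dec_induct)
  case base
  have "\<phi> 0 - \<phi> m = (\<Sum>k<m. \<phi> k - \<phi> (Suc k))" by (rule sum_lessThan_telescope'[symmetric])
  also have "\<dots> \<le> (\<Sum>k<m. l k)" by (intro sum_mono assms(2)) simp
  finally show ?case by simp
next
  case (step n)
  then show ?case using assms(3)[of n] by simp
qed

lemma I_AB_ge_chain_pivot_jump:
  assumes "prob_dist M d p" "nonsignalling M d p" and "z \<in> {1..M}" and "m < 2 * M"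
  shows "chain_pivot M d p z 1 m - chain_pivot M d p z 0 m \<le> I_AB M d p"
proof -
  have "chain_pivot M d p z 0 0 - chain_pivot M d p z 0 m
      + chain_pivot M d p z 1 m - chain_pivot M d p z 1 (2 * M) \<le> (\<Sum>k<2 * M. chain_link M d p k)"
    using assms by (intro telescope_switch_le_sum chain_link_ge_pivot_diff) simp_all
  moreover have "chain_pivot M d p z 1 (2 * M) = chain_pivot M d p z 0 0"
    using assms(3) by (simp add: chain_pivot_def)
  ultimately show ?thesis by (simp add: I_AB_eq_sum_chain_link)
qed

theorem theorem1:
  fixes M d :: nat and p :: behaviour
  assumes "M \<ge> 2" and "d \<ge> 2"
    and "prob_dist M d p" and "nonsignalling M d p"
    and "i \<in> {1..M}" and "j \<in> {1..M}"
  shows "I_AB M d p + expmod d (margAC d p i j) (\<lambda>a c. a - c)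
            + expmod d (margAC d p i j) (\<lambda>a c. c - a) \<ge> real d - 1
    \<and> I_AB M d p + expmod d (margBC d p i j) (\<lambda>b c. b - c)
            + expmod d (margBC d p i j) (\<lambda>b c. c - b) \<ge> real d - 1"
proof
  have A_node: "2 * (i - 1) < 2 * M" and B_node: "Suc (2 * (i - 1)) < 2 * M"
    using assms(5) by auto
  have d: "d > 0" using assms(2) by simp
  have "expmod d (margAC d p i j) (\<lambda>a c. a - c - 1) - expmod d (margAC d p i j) (\<lambda>a c. a - c)
      \<le> I_AB M d p"
    using I_AB_ge_chain_pivot_jump[OF assms(3,4,6) A_node]
    unfolding chain_pivot_A_node[OF assms(5)] by simp
  moreover have "expmod d (margAC d p i j) (\<lambda>a c. a - c - 1) + expmod d (margAC d p i j) (\<lambda>a c. c - a)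
      = real d - 1"
    using expmod_add_complement[OF _ d] margAC_total[OF assms(3,5,6)] by simp
  ultimately show "I_AB M d p + expmod d (margAC d p i j) (\<lambda>a c. a - c)
      + expmod d (margAC d p i j) (\<lambda>a c. c - a) \<ge> real d - 1" by linarith
  have "expmod d (margBC d p i j) (\<lambda>b c. b - c - 1) - expmod d (margBC d p i j) (\<lambda>b c. b - c)
      \<le> I_AB M d p"
    using I_AB_ge_chain_pivot_jump[OF assms(3,4,6) B_node]
    unfolding chain_pivot_B_node[OF assms(5)] by simp
  moreover have "expmod d (margBC d p i j) (\<lambda>b c. b - c - 1) + expmod d (margBC d p i j) (\<lambda>b c. c - b)
      = real d - 1"
    using expmod_add_complement[OF _ d] margBC_total[OF assms(3,5,6)] by simp
  ultimately show "I_AB M d p + expmod d (margBC d p i j) (\<lambda>b c. b - c)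
      + expmod d (margBC d p i j) (\<lambda>b c. c - b) \<ge> real d - 1" by linarith
qed

end
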